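(* There is an Abelian torsion group $G$ with a proper invariant metric $d_G$ such that $\operatorname{l\text{-}asdim}(G,d_G)=0$ and $\operatorname{asdim}_{AN}(G,d_G)=\infty$.
   Context: For a metric space $X$: $\operatorname{asdim}_{AN}(X)\le n$ iff there are $b,c\ge0$ such that for every $r>0$ there are families $\mathcal U_1,\dots,\mathcal U_{n+1}$ of subsets covering $X$, each $r$-disjoint (points in different members of the same family at distance $\ge r$), with members of diameter $\le cr+b$; $\operatorname{asdim}_{AN}(X)=\infty$ if no such $n$ exists. $\operatorname{l\text{-}asdim}(X)\le n$ iff there are $c>0$ and an unbounded set $U\subset\mathbb R_+$ such that for every $r\in U$ there are families $\mathcal U_1,\dots,\mathcal U_{n+1}$ covering $X$, each $r$-disjoint, with members of diameter $\le cr$. A metric on a group is invariant if $d(g+x,g+y)=d(x,y)$; proper means bounded sets are finite. *)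

theory Defs
  imports "HOL-Analysis.Abstract_Metric_Spaces" "HOL-Algebra.Group"
begin

definition r_disjoint :: "('a \<Rightarrow> 'a \<Rightarrow> real) \<Rightarrow> real \<Rightarrow> 'a set set \<Rightarrow> bool" where
  "r_disjoint d r \<U> \<longleftrightarrow>
     (\<forall>A\<in>\<U>. \<forall>B\<in>\<U>. A \<noteq> B \<longrightarrow> (\<forall>x\<in>A. \<forall>y\<in>B. d x y \<ge> r))"

definition diam_bounded :: "('a \<Rightarrow> 'a \<Rightarrow> real) \<Rightarrow> real \<Rightarrow> 'a set set \<Rightarrow> bool" where
  "diam_bounded d D \<U> \<longleftrightarrow> (\<forall>A\<in>\<U>. \<forall>x\<in>A. \<forall>y\<in>A. d x y \<le> D)"

definition good_cover :: "'a set \<Rightarrow> ('a \<Rightarrow> 'a \<Rightarrow> real) \<Rightarrow> nat \<Rightarrow> real \<Rightarrow> real \<Rightarrow> bool" where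
  "good_cover X d n r D \<longleftrightarrow>
     (\<exists>\<U> :: nat \<Rightarrow> 'a set set.
        (\<forall>i\<le>n. \<forall>A\<in>\<U> i. A \<subseteq> X) \<and>
        X \<subseteq> (\<Union>i\<le>n. \<Union>(\<U> i)) \<and>
        (\<forall>i\<le>n. r_disjoint d r (\<U> i)) \<and>
        (\<forall>i\<le>n. diam_bounded d D (\<U> i)))"

definition asdim_AN_le :: "'a set \<Rightarrow> ('a \<Rightarrow> 'a \<Rightarrow> real) \<Rightarrow> nat \<Rightarrow> bool" where
  "asdim_AN_le X d n \<longleftrightarrow>
     (\<exists>b c. b \<ge> 0 \<and> c \<ge> 0 \<and> (\<forall>r>0. good_cover X d n r (c * r + b)))"

definition asdim_AN_infinite :: "'a set \<Rightarrow> ('a \<Rightarrow> 'a \<Rightarrow> real) \<Rightarrow> bool" where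
  "asdim_AN_infinite X d \<longleftrightarrow> (\<forall>n. \<not> asdim_AN_le X d n)"

definition l_asdim_le :: "'a set \<Rightarrow> ('a \<Rightarrow> 'a \<Rightarrow> real) \<Rightarrow> nat \<Rightarrow> bool" where
  "l_asdim_le X d n \<longleftrightarrow>
     (\<exists>c U. c > 0 \<and> U \<subseteq> {0..} \<and> (\<forall>M. \<exists>r\<in>U. r > M) \<and>
        (\<forall>r\<in>U. good_cover X d n r (c * r)))"

definition torsion_group :: "('a, 'b) monoid_scheme \<Rightarrow> bool" where
  "torsion_group G \<longleftrightarrow> (\<forall>x\<in>carrier G. \<exists>n::nat. n > 0 \<and> x [^]\<^bsub>G\<^esub> n = \<one>\<^bsub>G\<^esub>)"

definition invariant_metric :: "('a, 'b) monoid_scheme \<Rightarrow> ('a \<Rightarrow> 'a \<Rightarrow> real) \<Rightarrow> bool" where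
  "invariant_metric G d \<longleftrightarrow>
     (\<forall>g\<in>carrier G. \<forall>x\<in>carrier G. \<forall>y\<in>carrier G. d (g \<otimes>\<^bsub>G\<^esub> x) (g \<otimes>\<^bsub>G\<^esub> y) = d x y)"

definition proper_metric :: "'a set \<Rightarrow> ('a \<Rightarrow> 'a \<Rightarrow> real) \<Rightarrow> bool" where
  "proper_metric X d \<longleftrightarrow> (\<forall>S\<subseteq>X. Metric_space.mbounded X d S \<longrightarrow> finite S)"

end

theory Submission
  imports Defs "HOL-Library.Nat_Bijection"
begin

(* G is the direct sum over j of the additive groups of j\<times>j matrices over Z/2, and d(x, y) is
  the sum over j of j! times the number of rows of block j in which x and y differ.

  At scale (J+1)! the cosets of the finite subgroup carried by the blocks j \<le> J are
  (J+1)!-disjoint and have diameter at most \<Sum>j\<le>J. j \<cdot> j! < (J+1)!, so l-asdim G = 0.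

  Block j, with the metric divided by j!, is the Hamming cube of length j over the alphabet
  (Z/2)^j. Fix a centre in each member of a 2j!-disjoint family of diameter \<le> D j!. Each point
  differs from the centre of its member in at most D rows, and forgetting one row a is injective
  on the points that agree with their centre in row a, because two points differing only in row a
  lie in the same member. Double counting shows the family meets at most j 2^(j(j-1)) / (j - D)
  points of the block. Hence n+1 such families cover at most 2(n+1) 2^(j(j-1)) of its 2^(j j)
  points once j \<ge> 2D, which fails for large j: asdim_AN G = \<infinity>. *)

lemma real_le_fact: "real n \<le> fact n"
  by (metis fact_ge_self of_nat_fact of_nat_le_iff)

lemma sum_mult_fact_le: "(\<Sum>j\<le>J. real j * fact j) \<le> fact (Suc J)"
proof (induction J)
  case (Suc J)
  then have "(\<Sum>j\<le>Suc J. real j * fact j) \<le> fact (Suc J) + real (Suc J) * fact (Suc J)"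
    by simp
  also have "\<dots> = fact (Suc (Suc J))"
    by (simp add: algebra_simps)
  finally show ?case .
qed simp

lemma good_cover_mono:
  assumes "good_cover X d n r D" "D \<le> D'"
  shows "good_cover X d n r D'"
proof -
  have "diam_bounded d D \<U> \<Longrightarrow> diam_bounded d D' \<U>" for \<U> :: "'a set set"
    unfolding diam_bounded_def using assms(2) by (meson order_trans)
  then show ?thesis
    using assms(1) unfolding good_cover_def by metis
qed

lemma good_cover_0_by_labels:
  fixes label :: "'a \<Rightarrow> 'b"
  assumes separated: "\<And>x y. x \<in> X \<Longrightarrow> y \<in> X \<Longrightarrow> label x \<noteq> label y \<Longrightarrow> r \<le> d x y"
    and bounded: "\<And>x y. x \<in> X \<Longrightarrow> y \<in> X \<Longrightarrow> label x = label y \<Longrightarrow> d x y \<le> D"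
  shows "good_cover X d 0 r D"
proof -
  define \<U> where "\<U> = (\<lambda>x. {y \<in> X. label y = label x}) ` X"
  have "r_disjoint d r \<U>"
    unfolding r_disjoint_def
  proof (intro ballI impI)
    fix A B x y
    assume "A \<in> \<U>" "B \<in> \<U>" "A \<noteq> B" "x \<in> A" "y \<in> B"
    then have "x \<in> X" "y \<in> X" "label x \<noteq> label y"
      unfolding \<U>_def by auto
    then show "r \<le> d x y"
      by (rule separated)
  qed
  moreover have "diam_bounded d D \<U>"
    unfolding diam_bounded_def \<U>_def using bounded by auto
  moreover have "X \<subseteq> \<Union>\<U>" "\<forall>A\<in>\<U>. A \<subseteq> X"
    unfolding \<U>_def by auto
  ultimately show ?thesis
    unfolding good_cover_def by (intro exI[of _ "\<lambda>_. \<U>"]) auto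
qed

lemma l_asdim_leI:
  assumes "c > 0" and "\<And>M. \<exists>r>M. good_cover X d n r (c * r)"
  shows "l_asdim_le X d n"
proof -
  define U where "U = {r. r > 0 \<and> good_cover X d n r (c * r)}"
  have "\<exists>r\<in>U. r > M" for M
  proof -
    obtain r where "r > max M 0" "good_cover X d n r (c * r)"
      using assms(2) by blast
    then show ?thesis
      unfolding U_def by auto
  qed
  moreover have "U \<subseteq> {0..}" "\<forall>r\<in>U. good_cover X d n r (c * r)"
    unfolding U_def by auto
  ultimately show ?thesis
    unfolding l_asdim_le_def using assms(1) by blast
qed

lemma card_mult_le_by_double_counting:
  fixes S :: "'a \<Rightarrow> nat set"
  assumes "finite V"
    and S_sub: "\<And>x. x \<in> V \<Longrightarrow> S x \<subseteq> {..<m}"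
    and S_card: "\<And>x. x \<in> V \<Longrightarrow> real (card (S x)) \<le> D"
    and avoiders: "\<And>a. a < m \<Longrightarrow> real (card {x \<in> V. a \<notin> S x}) \<le> K"
  shows "real (card V) * (real m - D) \<le> real m * K"
proof -
  have "(\<Sum>a<m. card {x \<in> V. a \<notin> S x}) = (\<Sum>a<m. \<Sum>x\<in>V. if a \<notin> S x then 1 else 0)"
    using \<open>finite V\<close> by (simp add: sum.If_cases Int_def)
  also have "\<dots> = (\<Sum>x\<in>V. \<Sum>a<m. if a \<notin> S x then 1 else 0)"
    by (rule sum.swap)
  also have "\<dots> = (\<Sum>x\<in>V. card ({..<m} - S x))"
    by (intro sum.cong refl) (simp add: sum.If_cases set_diff_eq Int_def)
  finally have swap: "(\<Sum>a<m. card {x \<in> V. a \<notin> S x}) = (\<Sum>x\<in>V. card ({..<m} - S x))" .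
  have "real m - D \<le> real (card ({..<m} - S x))" if "x \<in> V" for x
  proof -
    have "card ({..<m} - S x) = m - card (S x)"
      using S_sub[OF that] by (simp add: card_Diff_subset finite_subset)
    moreover have "card (S x) \<le> m"
      using card_mono[OF _ S_sub[OF that]] by simp
    ultimately show ?thesis
      using S_card[OF that] by (simp add: of_nat_diff)
  qed
  then have "real (card V) * (real m - D) \<le> (\<Sum>x\<in>V. real (card ({..<m} - S x)))"
    using sum_mono[of V "\<lambda>_. real m - D"] by simp
  also have "\<dots> = (\<Sum>a<m. real (card {x \<in> V. a \<notin> S x}))"
    by (simp only: swap flip: of_nat_sum)
  also have "\<dots> \<le> real m * K"
    using sum_mono[of "{..<m}" _ "\<lambda>_. K"] avoiders by simp
  finally show ?thesis .
qed

definition hamming_dist :: "nat \<Rightarrow> (nat \<Rightarrow> 'a \<Rightarrow> 'b) \<Rightarrow> 'a \<Rightarrow> 'a \<Rightarrow> nat" where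
  "hamming_dist m coord x y = card {a \<in> {..<m}. coord a x \<noteq> coord a y}"

lemma hamming_cover_card_bound:
  fixes coord :: "nat \<Rightarrow> 'a \<Rightarrow> 'b" and \<U> :: "'a set set"
  assumes "finite V" "finite R"
    and coord_in: "\<And>a x. a < m \<Longrightarrow> x \<in> V \<Longrightarrow> coord a x \<in> R"
    and coords_determine: "\<And>x y. x \<in> V \<Longrightarrow> y \<in> V \<Longrightarrow> (\<And>a. a < m \<Longrightarrow> coord a x = coord a y) \<Longrightarrow> x = y"
    and cover: "V \<subseteq> \<Union>\<U>"
    and separated: "\<And>A B x y. A \<in> \<U> \<Longrightarrow> B \<in> \<U> \<Longrightarrow> x \<in> A \<inter> V \<Longrightarrow> y \<in> B \<inter> V \<Longrightarrow>
      hamming_dist m coord x y \<le> 1 \<Longrightarrow> A = B"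
    and bounded: "\<And>A x y. A \<in> \<U> \<Longrightarrow> x \<in> A \<inter> V \<Longrightarrow> y \<in> A \<inter> V \<Longrightarrow>
      real (hamming_dist m coord x y) \<le> D"
  shows "real (card V) * (real m - D) \<le> real m * real (card R ^ (m - 1))"
proof -
  define member where "member x = (SOME A. A \<in> \<U> \<and> x \<in> A)" for x
  define centre where "centre x = (SOME z. z \<in> member x \<inter> V)" for x
  define defect where "defect x = {a \<in> {..<m}. coord a x \<noteq> coord a (centre x)}" for x
  have member: "member x \<in> \<U> \<and> x \<in> member x" if "x \<in> V" for x
  proof -
    have "\<exists>A. A \<in> \<U> \<and> x \<in> A"
      using cover that by blast
    then show ?thesis
      unfolding member_def by (rule someI_ex)
  qed
  have centre: "centre x \<in> member x \<inter> V" if "x \<in> V" for x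
  proof -
    have "\<exists>z. z \<in> member x \<inter> V"
      using member that by blast
    then show ?thesis
      unfolding centre_def by (rule someI_ex)
  qed
  have defect_card: "real (card (defect x)) \<le> D" if "x \<in> V" for x
  proof -
    have "real (hamming_dist m coord x (centre x)) \<le> D"
      using member[OF that] centre[OF that] that by (intro bounded[of "member x"]) auto
    then show ?thesis
      by (simp add: defect_def hamming_dist_def)
  qed
  have avoiders: "real (card {x \<in> V. a \<notin> defect x}) \<le> real (card R ^ (m - 1))" if "a < m" for a
  proof -
    define forget_coord where "forget_coord x = restrict (\<lambda>a'. coord a' x) ({..<m} - {a})" for x
    have "inj_on forget_coord {x \<in> V. a \<notin> defect x}"
    proof (rule inj_onI)
      fix x y
      assume x: "x \<in> {x \<in> V. a \<notin> defect x}" and y: "y \<in> {x \<in> V. a \<notin> defect x}"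
        and eq: "forget_coord x = forget_coord y"
      have other_coords: "coord a' x = coord a' y" if "a' < m" "a' \<noteq> a" for a'
        using that fun_cong[OF eq, of a'] by (simp add: forget_coord_def)
      then have "hamming_dist m coord x y \<le> card {a}"
        unfolding hamming_dist_def by (intro card_mono) auto
      then have "member x = member y"
        using member x y by (intro separated[of "member x" "member y" x y]) auto
      then have "centre x = centre y"
        by (simp add: centre_def)
      then have "coord a x = coord a y"
        using x y \<open>a < m\<close> by (simp add: defect_def)
      then show "x = y"
        using coords_determine x y other_coords by blast
    qed
    moreover have "forget_coord ` {x \<in> V. a \<notin> defect x} \<subseteq> PiE ({..<m} - {a}) (\<lambda>_. R)"
      unfolding forget_coord_def by (intro image_subsetI) (simp add: Pi_iff coord_in)
    ultimately have "card {x \<in> V. a \<notin> defect x} \<le> card (PiE ({..<m} - {a}) (\<lambda>_. R))"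
      using \<open>finite R\<close> by (intro card_inj_on_le) (auto simp: finite_PiE)
    also have "\<dots> = card R ^ (m - 1)"
      using \<open>a < m\<close> by (simp add: card_PiE)
    finally show ?thesis
      by (simp only: of_nat_le_iff)
  qed
  show ?thesis
    by (rule card_mult_le_by_double_counting[OF \<open>finite V\<close> _ defect_card avoiders])
      (auto simp: defect_def)
qed

definition triple_encode :: "nat \<times> nat \<times> nat \<Rightarrow> nat" where
  "triple_encode t = prod_encode (fst t, prod_encode (snd t))"

definition triple_decode :: "nat \<Rightarrow> nat \<times> nat \<times> nat" where
  "triple_decode e = (fst (prod_decode e), prod_decode (snd (prod_decode e)))"

lemma triple_decode_inverse [simp]: "triple_encode (triple_decode e) = e"
  by (simp add: triple_encode_def triple_decode_def)

lemma triple_encode_inverse [simp]: "triple_decode (triple_encode t) = t"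
  by (simp add: triple_encode_def triple_decode_def)

definition entries :: "nat \<Rightarrow> (nat \<times> nat \<times> nat) set" where
  "entries x = triple_decode ` set_decode x"

definition of_entries :: "(nat \<times> nat \<times> nat) set \<Rightarrow> nat" where
  "of_entries S = set_encode (triple_encode ` S)"

lemma finite_entries [simp]: "finite (entries x)"
  by (simp add: entries_def)

lemma of_entries_entries [simp]: "of_entries (entries x) = x"
  by (simp add: of_entries_def entries_def image_image)

lemma entries_of_entries [simp]: "finite S \<Longrightarrow> entries (of_entries S) = S"
  by (simp add: of_entries_def entries_def image_image)

lemma entries_inject: "entries x = entries y \<longleftrightarrow> x = y"
  by (metis of_entries_entries)

lemma entries_0 [simp]: "entries 0 = {}"
  by (simp add: entries_def)

lemma of_entries_empty [simp]: "of_entries {} = 0"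
  by (simp add: of_entries_def)

text \<open>The entry \<open>(j, a, b)\<close> is the entry in row \<open>a\<close> and column \<open>b\<close> of the \<open>j \<times> j\<close> matrix
  forming block \<open>j\<close>.\<close>

definition block_positions :: "(nat \<times> nat \<times> nat) set" where
  "block_positions = {(j, a, b). a < j \<and> b < j}"

definition block_group :: "nat monoid" where
  "block_group =
     \<lparr>carrier = {x. entries x \<subseteq> block_positions},
      mult = (\<lambda>x y. of_entries (sym_diff (entries x) (entries y))),
      one = 0\<rparr>"

lemma block_group_simps [simp]:
  "carrier block_group = {x. entries x \<subseteq> block_positions}"
  "x \<otimes>\<^bsub>block_group\<^esub> y = of_entries (sym_diff (entries x) (entries y))"
  "\<one>\<^bsub>block_group\<^esub> = 0"
  by (simp_all add: block_group_def)

lemma comm_group_block_group: "comm_group block_group"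
proof (rule comm_groupI)
  fix x assume "x \<in> carrier block_group"
  then show "\<exists>y\<in>carrier block_group. y \<otimes>\<^bsub>block_group\<^esub> x = \<one>\<^bsub>block_group\<^esub>"
    by (intro bexI[of _ x]) auto
next
  fix x y z
  show "x \<otimes>\<^bsub>block_group\<^esub> y \<otimes>\<^bsub>block_group\<^esub> z = x \<otimes>\<^bsub>block_group\<^esub> (y \<otimes>\<^bsub>block_group\<^esub> z)"
    by (simp, intro arg_cong[where f = of_entries]) blast
  show "x \<otimes>\<^bsub>block_group\<^esub> y = y \<otimes>\<^bsub>block_group\<^esub> x"
    by (simp add: Un_commute)
qed auto

lemma torsion_group_block_group: "torsion_group block_group"
proof -
  have "x [^]\<^bsub>block_group\<^esub> (2::nat) = \<one>\<^bsub>block_group\<^esub>" for x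
    by (simp add: numeral_2_eq_2)
  then show ?thesis
    unfolding torsion_group_def by (blast intro: zero_less_numeral)
qed

definition rows_of :: "(nat \<times> nat \<times> nat) set \<Rightarrow> (nat \<times> nat) set" where
  "rows_of S = (\<lambda>(j, a, b). (j, a)) ` S"

definition row_weight :: "(nat \<times> nat \<times> nat) set \<Rightarrow> real" where
  "row_weight S = (\<Sum>(j, a)\<in>rows_of S. fact j)"

definition block_dist :: "nat \<Rightarrow> nat \<Rightarrow> real" where
  "block_dist x y = row_weight (sym_diff (entries x) (entries y))"

lemma row_weight_nonneg: "0 \<le> row_weight S"
  unfolding row_weight_def by (rule sum_nonneg) auto

lemma row_weight_mono: "A \<subseteq> B \<Longrightarrow> finite B \<Longrightarrow> row_weight A \<le> row_weight B"
  unfolding row_weight_def rows_of_def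
  by (rule sum_mono2) (auto simp: case_prod_beta)

lemma row_weight_Un_le:
  assumes "finite A" "finite B"
  shows "row_weight (A \<union> B) \<le> row_weight A + row_weight B"
proof -
  have "row_weight (A \<union> B) = row_weight A + row_weight B - (\<Sum>(j, a)\<in>rows_of A \<inter> rows_of B. fact j)"
    unfolding row_weight_def rows_of_def image_Un using assms by (intro sum_Un) auto
  moreover have "0 \<le> (\<Sum>(j, a)\<in>rows_of A \<inter> rows_of B. fact j :: real)"
    by (rule sum_nonneg) auto
  ultimately show ?thesis
    by linarith
qed

lemma row_weight_eq_0_iff: "finite S \<Longrightarrow> row_weight S = 0 \<longleftrightarrow> S = {}"
  unfolding row_weight_def rows_of_def by (subst sum_nonneg_eq_0_iff) auto

lemma fact_le_row_weight:
  assumes "(j, a, b) \<in> S" "finite S"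
  shows "fact j \<le> row_weight S"
proof -
  have "(j, a) \<in> rows_of S"
    using assms(1) by (force simp: rows_of_def)
  then have "(case (j, a) of (j, a) \<Rightarrow> fact j) \<le> row_weight S"
    unfolding row_weight_def by (rule member_le_sum) (use assms(2) in \<open>auto simp: rows_of_def\<close>)
  then show ?thesis
    by simp
qed

lemma row_weight_low_blocks_le:
  assumes "S \<subseteq> block_positions" "\<And>t. t \<in> S \<Longrightarrow> fst t \<le> J"
  shows "row_weight S \<le> fact (Suc J)"
proof -
  have "rows_of S \<subseteq> Sigma {..J} (\<lambda>j. {..<j})"
    using assms by (force simp: rows_of_def block_positions_def)
  then have "row_weight S \<le> (\<Sum>(j, a)\<in>Sigma {..J} (\<lambda>j. {..<j}). fact j)"
    unfolding row_weight_def by (intro sum_mono2) auto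
  also have "\<dots> = (\<Sum>j\<le>J. \<Sum>a<j. fact j)"
    by (rule sum.Sigma[symmetric]) auto
  also have "\<dots> = (\<Sum>j\<le>J. real j * fact j)"
    by simp
  also have "\<dots> \<le> fact (Suc J)"
    by (rule sum_mult_fact_le)
  finally show ?thesis .
qed

lemma row_weight_single_block:
  assumes "\<And>t. t \<in> S \<Longrightarrow> fst t = j"
  shows "row_weight S = fact j * real (card {a. \<exists>b. (j, a, b) \<in> S})"
proof -
  have "rows_of S = Pair j ` {a. \<exists>b. (j, a, b) \<in> S}"
    using assms by (force simp: rows_of_def image_iff)
  then have "row_weight S = (\<Sum>a\<in>{a. \<exists>b. (j, a, b) \<in> S}. fact j)"
    unfolding row_weight_def by (simp add: sum.reindex inj_on_def)
  then show ?thesis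
    by simp
qed

lemma fact_le_block_dist:
  "t \<in> sym_diff (entries x) (entries y) \<Longrightarrow> fact (fst t) \<le> block_dist x y"
  unfolding block_dist_def by (cases t) (auto intro: fact_le_row_weight)

lemma Metric_space_block_dist: "Metric_space (carrier block_group) block_dist"
proof
  fix x y z
  show "0 \<le> block_dist x y"
    by (simp add: block_dist_def row_weight_nonneg)
  show "block_dist x y = block_dist y x"
    by (simp add: block_dist_def Un_commute)
  show "block_dist x y = 0 \<longleftrightarrow> x = y"
    by (auto simp: block_dist_def row_weight_eq_0_iff simp flip: entries_inject)
  have "block_dist x z \<le> row_weight (sym_diff (entries x) (entries y) \<union> sym_diff (entries y) (entries z))"
    unfolding block_dist_def by (rule row_weight_mono) auto
  also have "\<dots> \<le> block_dist x y + block_dist y z"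
    unfolding block_dist_def by (rule row_weight_Un_le) auto
  finally show "block_dist x z \<le> block_dist x y + block_dist y z" .
qed

lemma invariant_metric_block_dist: "invariant_metric block_group block_dist"
  unfolding invariant_metric_def block_dist_def
  by (auto intro!: arg_cong[where f = row_weight])

lemma proper_metric_block_dist: "proper_metric (carrier block_group) block_dist"
  unfolding proper_metric_def
proof (intro allI impI)
  fix S assume "S \<subseteq> carrier block_group" "Metric_space.mbounded (carrier block_group) block_dist S"
  then obtain x B where ball: "S \<subseteq> Metric_space.mcball (carrier block_group) block_dist x B"
    using Metric_space.mbounded_def[OF Metric_space_block_dist] by blast
  define N where "N = nat \<lceil>B\<rceil>"
  define F where "F = entries x \<union> {..N} \<times> {..N} \<times> {..N}"
  have "entries y \<subseteq> F" if "y \<in> S" for y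
  proof
    fix t assume t: "t \<in> entries y"
    obtain j a b where t_eq: "t = (j, a, b)"
      by (cases t) auto
    show "t \<in> F"
    proof (cases "t \<in> entries x")
      case False
      have "y \<in> carrier block_group \<and> block_dist x y \<le> B"
        using \<open>y \<in> S\<close> ball Metric_space.in_mcball[OF Metric_space_block_dist] by blast
      then have "entries y \<subseteq> block_positions" "block_dist x y \<le> B"
        by simp_all
      moreover have "real j \<le> block_dist x y"
        using real_le_fact[of j] fact_le_block_dist[of t x y] t t_eq False by simp
      ultimately have "j \<le> N"
        unfolding N_def by linarith
      moreover have "a < j" "b < j"
        using \<open>entries y \<subseteq> block_positions\<close> t t_eq by (auto simp: block_positions_def)
      ultimately show ?thesis
        by (simp add: F_def t_eq)
    qed (simp add: F_def)
  qed
  then have "S \<subseteq> of_entries ` Pow F"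
    by (metis PowI image_eqI of_entries_entries subsetI)
  moreover have "finite F"
    by (simp add: F_def)
  ultimately show "finite S"
    by (rule finite_subset[OF _ finite_imageI[OF finite_Pow_iff[THEN iffD2]]])
qed

lemma good_cover_block_group:
  "good_cover (carrier block_group) block_dist 0 (fact (Suc J)) (fact (Suc J))"
proof (rule good_cover_0_by_labels[where label = "\<lambda>x. {t \<in> entries x. J < fst t}"])
  fix x y
  assume "{t \<in> entries x. J < fst t} \<noteq> {t \<in> entries y. J < fst t}"
  then obtain t where t: "t \<in> sym_diff (entries x) (entries y)" "J < fst t"
    by blast
  then have "fact (Suc J) \<le> (fact (fst t) :: real)"
    by (intro fact_mono) simp
  also have "\<dots> \<le> block_dist x y"
    using t(1) by (rule fact_le_block_dist)
  finally show "fact (Suc J) \<le> block_dist x y" .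
next
  fix x y
  assume "x \<in> carrier block_group" "y \<in> carrier block_group"
    and high_eq: "{t \<in> entries x. J < fst t} = {t \<in> entries y. J < fst t}"
  have "sym_diff (entries x) (entries y) \<subseteq> block_positions"
    using \<open>x \<in> carrier block_group\<close> \<open>y \<in> carrier block_group\<close> by auto
  moreover have "fst t \<le> J" if "t \<in> sym_diff (entries x) (entries y)" for t
    using that high_eq[unfolded set_eq_iff, rule_format, of t] by auto
  ultimately show "block_dist x y \<le> fact (Suc J)"
    unfolding block_dist_def by (rule row_weight_low_blocks_le)
qed

lemma l_asdim_le_block_group: "l_asdim_le (carrier block_group) block_dist 0"
proof (rule l_asdim_leI[where c = 1])
  fix M :: real
  obtain J :: nat where "M < real J"
    using reals_Archimedean2 by blast
  moreover have "real J \<le> fact (Suc J)"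
    using real_le_fact[of "Suc J"] by linarith
  ultimately show "\<exists>r>M. good_cover (carrier block_group) block_dist 0 r (1 * r)"
    using good_cover_block_group by (intro exI[of _ "fact (Suc J)"]) auto
qed simp

definition block_elements :: "nat \<Rightarrow> nat set" where
  "block_elements j = {x. entries x \<subseteq> {j} \<times> {..<j} \<times> {..<j}}"

definition block_row :: "nat \<Rightarrow> nat \<Rightarrow> nat \<Rightarrow> nat set" where
  "block_row j a x = {b. (j, a, b) \<in> entries x}"

lemma block_elements_subset_carrier: "block_elements j \<subseteq> carrier block_group"
  by (auto simp: block_elements_def block_positions_def)

lemma bij_betw_entries_block_elements:
  "bij_betw entries (block_elements j) (Pow ({j} \<times> {..<j} \<times> {..<j}))"
proof (rule bij_betwI[where g = of_entries])
  have "finite S" if "S \<subseteq> {j} \<times> {..<j} \<times> {..<j}" for S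
    using that by (rule finite_subset) simp
  then show "of_entries \<in> Pow ({j} \<times> {..<j} \<times> {..<j}) \<rightarrow> block_elements j"
    and "\<And>S. S \<in> Pow ({j} \<times> {..<j} \<times> {..<j}) \<Longrightarrow> entries (of_entries S) = S"
    by (auto simp: block_elements_def)
qed (auto simp: block_elements_def)

lemma card_block_elements: "card (block_elements j) = 2 ^ (j * j)"
  using bij_betw_same_card[OF bij_betw_entries_block_elements]
  by (simp add: card_Pow card_cartesian_product)

lemma finite_block_elements: "finite (block_elements j)"
  using bij_betw_finite[OF bij_betw_entries_block_elements] by simp

lemma block_dist_eq_hamming:
  assumes "x \<in> block_elements j" "y \<in> block_elements j"
  shows "block_dist x y = fact j * real (hamming_dist j (block_row j) x y)"
proof -
  have "{a. \<exists>b. (j, a, b) \<in> sym_diff (entries x) (entries y)} =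
      {a \<in> {..<j}. block_row j a x \<noteq> block_row j a y}"
    using assms by (auto simp: block_elements_def block_row_def)
  moreover have "fst t = j" if "t \<in> sym_diff (entries x) (entries y)" for t
    using assms that by (auto simp: block_elements_def)
  ultimately show ?thesis
    unfolding block_dist_def hamming_dist_def by (subst row_weight_single_block) auto
qed

lemma card_block_elements_Int_family_le:
  assumes "0 < j" and "2 * D \<le> real j"
    and disjoint: "r_disjoint block_dist (2 * fact j) \<U>"
    and bounded: "diam_bounded block_dist (D * fact j) \<U>"
  shows "card (block_elements j \<inter> \<Union>\<U>) \<le> 2 * 2 ^ ((j - 1) * j)"
proof -
  define V where "V = block_elements j \<inter> \<Union>\<U>"
  have hamming_bound: "real (card V) * (real j - D) \<le> real j * real (card (Pow {..<j}) ^ (j - 1))"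
  proof (rule hamming_cover_card_bound[where coord = "block_row j" and \<U> = \<U>])
    show "finite V"
      unfolding V_def using finite_block_elements by blast
    show "block_row j a x \<in> Pow {..<j}" if "x \<in> V" for a x
      using that by (auto simp: V_def block_elements_def block_row_def)
    show "x = y" if "x \<in> V" "y \<in> V" "\<And>a. a < j \<Longrightarrow> block_row j a x = block_row j a y" for x y
    proof -
      have "entries x = entries y"
        using that by (auto simp: V_def block_elements_def block_row_def set_eq_iff)
      then show ?thesis
        by (simp add: entries_inject)
    qed
    show "A = B" if "A \<in> \<U>" "B \<in> \<U>" "x \<in> A \<inter> V" "y \<in> B \<inter> V"
      and "hamming_dist j (block_row j) x y \<le> 1" for A B x y
    proof (rule ccontr)
      assume "A \<noteq> B"
      then have "2 * fact j \<le> block_dist x y"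
        using disjoint that unfolding r_disjoint_def by blast
      also have "\<dots> \<le> fact j"
        using that block_dist_eq_hamming[of x j y] by (simp add: V_def)
      finally show False
        by simp
    qed
    show "real (hamming_dist j (block_row j) x y) \<le> D" if "A \<in> \<U>" "x \<in> A \<inter> V" "y \<in> A \<inter> V" for A x y
    proof -
      have "block_dist x y \<le> D * fact j"
        using bounded that unfolding diam_bounded_def by blast
      moreover have "block_dist x y = fact j * real (hamming_dist j (block_row j) x y)"
        using that by (intro block_dist_eq_hamming) (auto simp: V_def)
      ultimately show ?thesis
        by (simp add: mult.commute)
    qed
  qed (auto simp: V_def)
  have "real (card V) * (real j / 2) \<le> real (card V) * (real j - D)"
    using assms(2) by (intro mult_left_mono) auto
  also note hamming_bound
  also have "real j * real (card (Pow {..<j}) ^ (j - 1)) = real j * 2 ^ ((j - 1) * j)"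
    by (simp add: card_Pow mult.commute[of "j - 1"] flip: power_mult)
  finally have "real (card V) * (real j / 2) \<le> real j * 2 ^ ((j - 1) * j)" .
  then have "real (card V) \<le> real (2 * 2 ^ ((j - 1) * j))"
    using \<open>0 < j\<close> by (simp add: field_simps)
  then show ?thesis
    unfolding V_def of_nat_le_iff .
qed

lemma good_cover_block_group_2_pow_le:
  assumes "good_cover (carrier block_group) block_dist n (2 * fact j) (D * fact j)"
    and "0 < j" "2 * D \<le> real j"
  shows "2 ^ j \<le> 2 * (n + 1)"
proof -
  obtain \<U> :: "nat \<Rightarrow> nat set set"
    where cover: "carrier block_group \<subseteq> (\<Union>i\<le>n. \<Union>(\<U> i))"
      and disjoint: "\<forall>i\<le>n. r_disjoint block_dist (2 * fact j) (\<U> i)"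
      and bounded: "\<forall>i\<le>n. diam_bounded block_dist (D * fact j) (\<U> i)"
    using assms(1) unfolding good_cover_def by metis
  define Y where "Y = block_elements j"
  have Y_covered: "Y \<subseteq> (\<Union>i\<le>n. Y \<inter> \<Union>(\<U> i))"
    using subset_trans[OF block_elements_subset_carrier cover] unfolding Y_def by blast
  have "j * j = j + (j - 1) * j"
    using \<open>0 < j\<close> by (cases j) auto
  then have "2 ^ j * 2 ^ ((j - 1) * j) = card Y"
    unfolding Y_def card_block_elements by (simp only: power_add)
  also have "\<dots> \<le> card (\<Union>i\<le>n. Y \<inter> \<Union>(\<U> i))"
    using Y_covered by (rule card_mono[rotated]) (simp add: Y_def finite_block_elements)
  also have "\<dots> \<le> (\<Sum>i\<le>n. card (Y \<inter> \<Union>(\<U> i)))"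
    by (rule card_UN_le) simp
  also have "\<dots> \<le> (\<Sum>i\<le>n. 2 * 2 ^ ((j - 1) * j))"
    using disjoint bounded assms(2,3) unfolding Y_def
    by (intro sum_mono card_block_elements_Int_family_le) auto
  also have "\<dots> = 2 * (n + 1) * 2 ^ ((j - 1) * j)"
    by simp
  finally have "2 ^ j * 2 ^ ((j - 1) * j) \<le> 2 * (n + 1) * 2 ^ ((j - 1) * j)" .
  then show ?thesis
    by (simp only: mult_le_cancel2) simp
qed

lemma not_asdim_AN_le_block_group: "\<not> asdim_AN_le (carrier block_group) block_dist n"
proof
  assume "asdim_AN_le (carrier block_group) block_dist n"
  then obtain b c where "b \<ge> 0" "c \<ge> 0"
    and cover: "\<And>r. r > 0 \<Longrightarrow> good_cover (carrier block_group) block_dist n r (c * r + b)"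
    unfolding asdim_AN_le_def by blast
  define D where "D = 2 * c + b"
  define j where "j = nat \<lceil>2 * D\<rceil> + 2 * n + 3"
  have "2 * D \<le> real j"
    unfolding j_def by linarith
  have "c * (2 * fact j) + b \<le> D * fact j"
    using \<open>b \<ge> 0\<close> mult_left_mono[OF fact_ge_1 \<open>b \<ge> 0\<close>, of j] by (simp add: D_def algebra_simps)
  moreover have "good_cover (carrier block_group) block_dist n (2 * fact j) (c * (2 * fact j) + b)"
    using cover by simp
  ultimately have "good_cover (carrier block_group) block_dist n (2 * fact j) (D * fact j)"
    using good_cover_mono by blast
  then have "2 ^ j \<le> 2 * (n + 1)"
    using \<open>2 * D \<le> real j\<close> by (intro good_cover_block_group_2_pow_le) (auto simp: j_def)
  moreover have "2 * (n + 1) < j"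
    by (simp add: j_def)
  ultimately show False
    using less_exp[of j] by linarith
qed

theorem mainTheorem17:
  shows "\<exists>(G :: nat monoid) (d :: nat \<Rightarrow> nat \<Rightarrow> real).
           comm_group G \<and> torsion_group G \<and>
           Metric_space (carrier G) d \<and> invariant_metric G d \<and> proper_metric (carrier G) d \<and>
           l_asdim_le (carrier G) d 0 \<and> asdim_AN_infinite (carrier G) d"
  unfolding asdim_AN_infinite_def
  by (intro exI[of _ block_group] exI[of _ block_dist] conjI allI comm_group_block_group
      torsion_group_block_group Metric_space_block_dist invariant_metric_block_dist
      proper_metric_block_dist l_asdim_le_block_group not_asdim_AN_le_block_group)

end
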